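(* For $\Gamma\in G(n,\tfrac12)$, the right-angled Coxeter group $W_\Gamma$ is asymptotically almost surely strongly algebraically thick; equivalently $\mathbb P(\Gamma\in\mathcal T)\to1$ as $n\to\infty$.
   Context: $G(n,p)$: random simplicial graphs on $n$ labelled vertices with each edge present independently with probability $p$. $W_\Gamma$ is the right-angled Coxeter group of $\Gamma$. $\mathcal T$ is the smallest class of finite simplicial graphs containing $K_{2,2}$, closed under adding a new vertex adjacent exactly to the vertices of an induced subgraph which is not a clique, and closed under gluing two members along a common induced subgraph which is not a clique (optionally adding edges between the two non-shared parts). A right-angled Coxeter group $W_\Gamma$ is strongly algebraically thick iff $\Gamma\in\mathcal T$; strongly algebraically thick means: order $0$ = wide (no cut points in asymptotic cones), order $\le n$ = algebraic network (finite collection of subgroups of order $\le n-1$, generating a finite-index subgroup, chained through infinite intersections with path-connected $C$-neighborhoods, each quasiconvex via $(C,C)$-quasigeodesics). *)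

theory Defs
  imports "HOL-Probability.Probability"
begin

text \<open>Finite simplicial graphs with vertices in nat: a vertex set and a set of
  edges, each edge a 2-element set of vertices.\<close>
type_synonym graph = "nat set \<times> nat set set"

definition wf_graph :: "graph \<Rightarrow> bool" where
  "wf_graph G \<longleftrightarrow> finite (fst G) \<and>
     (\<forall>e\<in>snd G. \<exists>u v. u \<in> fst G \<and> v \<in> fst G \<and> u \<noteq> v \<and> e = {u, v})"

definition is_clique :: "nat set set \<Rightarrow> nat set \<Rightarrow> bool" where
  "is_clique E S \<longleftrightarrow> (\<forall>u\<in>S. \<forall>v\<in>S. u \<noteq> v \<longrightarrow> {u, v} \<in> E)"

definition induced_edges :: "nat set set \<Rightarrow> nat set \<Rightarrow> nat set set" where
  "induced_edges E S = {e \<in> E. e \<subseteq> S}"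

definition K22 :: graph where
  "K22 = ({0, 1, 2, 3}, {{0, 1}, {1, 2}, {2, 3}, {3, 0}})"

inductive_set thick_class :: "graph set" where
  base: "K22 \<in> thick_class"
| iso: "(V, E) \<in> thick_class \<Longrightarrow> inj_on f V \<Longrightarrow>
        (f ` V, (\<lambda>e. f ` e) ` E) \<in> thick_class"
| cone: "(V, E) \<in> thick_class \<Longrightarrow> v \<notin> V \<Longrightarrow> S \<subseteq> V \<Longrightarrow> \<not> is_clique E S \<Longrightarrow>
        (insert v V, E \<union> {{v, s} | s. s \<in> S}) \<in> thick_class"
| glue: "(V1, E1) \<in> thick_class \<Longrightarrow> (V2, E2) \<in> thick_class \<Longrightarrow>
        C = V1 \<inter> V2 \<Longrightarrow> induced_edges E1 C = induced_edges E2 C \<Longrightarrow>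
        \<not> is_clique E1 C \<Longrightarrow>
        F \<subseteq> {{u, w} | u w. u \<in> V1 - C \<and> w \<in> V2 - C} \<Longrightarrow>
        (V1 \<union> V2, E1 \<union> E2 \<union> F) \<in> thick_class"

definition all_edges :: "nat \<Rightarrow> nat set set" where
  "all_edges n = {{u, v} | u v. u < v \<and> v < n}"

definition Gnp :: "nat \<Rightarrow> real \<Rightarrow> nat set set pmf" where
  "Gnp n p = map_pmf (\<lambda>f. {e \<in> all_edges n. f e})
               (Pi_pmf (all_edges n) False (\<lambda>_. bernoulli_pmf p))"

end

theory Submission
  imports Defs "HOL-Real_Asymp.Real_Asymp"
begin

text \<open>An induced square a, b, c, d is a copy of \<open>K\<^sub>2\<^sub>,\<^sub>2\<close>, and an induced subgraph B grows by
  coning off any outside vertex whose neighbourhood in B is not a clique. If every vertex v has two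
  non-adjacent common neighbours with a and c, such an outside vertex exists as long as
  \<open>a, c \<in> B \<noteq> V\<close>: one of the two neighbours sees the non-adjacent pair a, c, or both lie
  in B and then v sees them. In \<open>G(n, 1/2)\<close> both properties fail with exponentially small
  probability, since there are about n/4 vertex-disjoint candidate squares and, for each triple,
  about n/2 vertex-disjoint candidate pairs of common neighbours.\<close>

abbreviation fair_coins :: "'a set \<Rightarrow> ('a \<Rightarrow> bool) pmf" where
  "fair_coins I \<equiv> Pi_pmf I False (\<lambda>_. bernoulli_pmf (1/2))"

lemma measure_pair_pmf_Times:
  "measure_pmf.prob (pair_pmf M N) (A \<times> B) = measure_pmf.prob M A * measure_pmf.prob N B"
proof -
  have "measure_pmf.prob (pair_pmf M N) (A \<times> B) =
        measure_pmf.prob (pair_pmf M N) ((A \<inter> set_pmf M) \<times> (B \<inter> set_pmf N))"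
    by (subst measure_Int_set_pmf[symmetric]) (auto intro: arg_cong2[where f = measure])
  also have "\<dots> = measure_pmf.prob M (A \<inter> set_pmf M) * measure_pmf.prob N (B \<inter> set_pmf N)"
    by (rule measure_pmf_prob_product) auto
  finally show ?thesis by (simp add: measure_Int_set_pmf)
qed

lemma prob_Pi_pmf_indep:
  assumes "finite I" and "A \<subseteq> I"
    and Q: "\<And>f g. \<forall>x\<in>A. f x = g x \<Longrightarrow> Q f = Q g"
    and R: "\<And>f g. \<forall>x\<in>I - A. f x = g x \<Longrightarrow> R f = R g"
  shows "measure_pmf.prob (Pi_pmf I d p) {f. Q f \<and> R f} =
         measure_pmf.prob (Pi_pmf I d p) {f. Q f} * measure_pmf.prob (Pi_pmf I d p) {f. R f}"
proof -
  define h :: "('a \<Rightarrow> 'b) \<times> ('a \<Rightarrow> 'b) \<Rightarrow> 'a \<Rightarrow> 'b"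
    where "h = (\<lambda>(f, g) x. if x \<in> A then f x else g x)"
  have "Pi_pmf I d p = Pi_pmf (A \<union> (I - A)) d p"
    using \<open>A \<subseteq> I\<close> by (simp add: Un_absorb1)
  also have "\<dots> = map_pmf h (pair_pmf (Pi_pmf A d p) (Pi_pmf (I - A) d p))"
    unfolding h_def using assms(1,2) by (intro Pi_pmf_union) (auto intro: finite_subset)
  finally have split: "Pi_pmf I d p = map_pmf h (pair_pmf (Pi_pmf A d p) (Pi_pmf (I - A) d p))" .
  have hQ: "Q (h (f, g)) = Q f" and hR: "R (h (f, g)) = R g" for f g
    by (rule Q R; simp add: h_def)+
  have "h -` {f. Q f \<and> R f} = {f. Q f} \<times> {g. R g}"
    and "h -` {f. Q f} = {f. Q f} \<times> UNIV" and "h -` {f. R f} = UNIV \<times> {g. R g}"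
    by (auto simp: hQ hR)
  then show ?thesis
    unfolding split measure_map_pmf by (simp only: measure_pair_pmf_Times) simp
qed

lemma prob_fair_coins_pattern:
  assumes "finite I" and "S \<subseteq> I"
  shows "measure_pmf.prob (fair_coins I) {f. \<forall>e\<in>S. f e = b e} = (1/2) ^ card S"
proof -
  define B where "B x = (if x \<in> S then {b x} else UNIV)" for x
  have "{f. \<forall>e\<in>S. f e = b e} = Pi I B"
    using assms(2) unfolding B_def Pi_def by auto
  then have "measure_pmf.prob (fair_coins I) {f. \<forall>e\<in>S. f e = b e}
      = (\<Prod>x\<in>I. measure_pmf.prob (bernoulli_pmf (1/2)) (B x))"
    using measure_Pi_pmf_Pi[OF assms(1)] by simp
  also have "\<dots> = (\<Prod>x\<in>I. if x \<in> S then 1/2 else 1)"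
    by (rule prod.cong) (auto simp: B_def measure_pmf_single)
  also have "\<dots> = (1/2) ^ card S"
    using assms by (simp add: prod.If_cases Int_absorb1)
  finally show ?thesis .
qed

lemma prob_fair_coins_avoid_patterns:
  assumes "finite I" and "finite J"
    and "\<And>j. j \<in> J \<Longrightarrow> S j \<subseteq> I" and "disjoint_family_on S J"
  shows "measure_pmf.prob (fair_coins I) {f. \<forall>j\<in>J. \<exists>e\<in>S j. f e \<noteq> b j e}
           = (\<Prod>j\<in>J. 1 - (1/2) ^ card (S j))"
  using assms(2-4)
proof (induction J rule: finite_induct)
  case empty
  then show ?case by simp
next
  case (insert j J)
  let ?Q = "\<lambda>f. \<exists>e\<in>S j. f e \<noteq> b j e" and ?R = "\<lambda>f. \<forall>j\<in>J. \<exists>e\<in>S j. f e \<noteq> b j e"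
  have Sj: "S j \<subseteq> I" using insert.prems(1) by simp
  have SJ: "S j' \<subseteq> I - S j" if "j' \<in> J" for j'
    using that insert.hyps(2) insert.prems disjoint_family_onD[of S "insert j J" j j'] by auto
  have "measure_pmf.prob (fair_coins I) {f. ?Q f \<and> ?R f} =
        measure_pmf.prob (fair_coins I) {f. ?Q f} * measure_pmf.prob (fair_coins I) {f. ?R f}"
    by (rule prob_Pi_pmf_indep[OF assms(1) Sj]) (use SJ in fastforce)+
  moreover have "measure_pmf.prob (fair_coins I) {f. ?Q f} = 1 - (1/2) ^ card (S j)"
    using measure_pmf.prob_compl[of "{f. \<forall>e\<in>S j. f e = b j e}" "fair_coins I"]
      prob_fair_coins_pattern[OF assms(1) Sj]
    by (simp add: Compl_eq_Diff_UNIV[symmetric] Collect_neg_eq[symmetric])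
  moreover have "measure_pmf.prob (fair_coins I) {f. ?R f} = (\<Prod>j\<in>J. 1 - (1/2) ^ card (S j))"
    using insert by (auto intro: disjoint_family_on_mono)
  ultimately show ?case using insert.hyps by simp
qed

lemma prob_fair_coins_avoid_patterns_le:
  assumes "finite I" and "finite J"
    and "\<And>j. j \<in> J \<Longrightarrow> S j \<subseteq> I" and "disjoint_family_on S J"
    and "\<And>j. j \<in> J \<Longrightarrow> card (S j) \<le> k" and "m \<le> card J"
  shows "measure_pmf.prob (fair_coins I) {f. \<forall>j\<in>J. \<exists>e\<in>S j. f e \<noteq> b j e}
           \<le> (1 - (1/2) ^ k) ^ m"
proof -
  have "(\<Prod>j\<in>J. 1 - (1/2::real) ^ card (S j)) \<le> (\<Prod>j\<in>J. 1 - (1/2) ^ k)"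
    using assms(5) by (intro prod_mono) (auto intro: power_decreasing simp: power_le_one)
  also have "\<dots> \<le> (1 - (1/2) ^ k) ^ m"
    using assms(6) by (simp add: power_decreasing power_le_one)
  finally show ?thesis
    using prob_fair_coins_avoid_patterns[OF assms(1-4)] by simp
qed

definition nonadjacent_common_nbrs :: "nat set set \<Rightarrow> nat set \<Rightarrow> nat \<Rightarrow> nat \<Rightarrow> bool" where
  "nonadjacent_common_nbrs E X w w' \<longleftrightarrow> w \<noteq> w' \<and> w \<notin> X \<and> w' \<notin> X \<and> {w, w'} \<notin> E \<and>
     (\<forall>x\<in>X. {x, w} \<in> E \<and> {x, w'} \<in> E)"

lemma thick_class_cone_induced:
  assumes E: "\<forall>e\<in>E. card e = 2"
    and B: "(B, induced_edges E B) \<in> thick_class" and "v \<notin> B"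
    and "\<not> is_clique E {s\<in>B. {v, s} \<in> E}"
  shows "(insert v B, induced_edges E (insert v B)) \<in> thick_class"
proof -
  let ?S = "{s\<in>B. {v, s} \<in> E}"
  have "\<not> is_clique (induced_edges E B) ?S"
    using assms(4) unfolding is_clique_def induced_edges_def by auto
  then have "(insert v B, induced_edges E B \<union> {{v, s} | s. s \<in> ?S}) \<in> thick_class"
    by (intro thick_class.cone[OF B \<open>v \<notin> B\<close>]) auto
  moreover have "e \<in> induced_edges E B \<union> {{v, s} | s. s \<in> ?S}"
    if "e \<in> induced_edges E (insert v B)" for e
  proof -
    have "e \<in> E" "e \<subseteq> insert v B"
      using that unfolding induced_edges_def by auto
    moreover obtain x y where "e = {x, y}" "x \<noteq> y"
      using E \<open>e \<in> E\<close> by (auto simp: card_2_iff)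
    ultimately show ?thesis
      unfolding induced_edges_def by (cases "x = v"; cases "y = v") (auto simp: insert_commute)
  qed
  then have "induced_edges E B \<union> {{v, s} | s. s \<in> ?S} = induced_edges E (insert v B)"
    unfolding induced_edges_def by auto
  ultimately show ?thesis by simp
qed

lemma exists_cone_vertex:
  assumes "{a, c} \<notin> E" "a \<noteq> c" "a \<in> B" "c \<in> B" "v \<in> V - B" "w \<in> V" "w' \<in> V"
    and "nonadjacent_common_nbrs E {a, c, v} w w'"
  shows "\<exists>u\<in>V - B. \<not> is_clique E {s\<in>B. {u, s} \<in> E}"
proof -
  have a_c: "\<not> is_clique E {s\<in>B. {u, s} \<in> E}" if "{a, u} \<in> E" "{c, u} \<in> E" for u
    using that assms(1-4) unfolding is_clique_def by (auto simp: insert_commute)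
  show ?thesis
  proof (cases "w \<in> B \<and> w' \<in> B")
    case True
    then have "\<not> is_clique E {s\<in>B. {v, s} \<in> E}"
      using assms(8) unfolding nonadjacent_common_nbrs_def is_clique_def by blast
    then show ?thesis using assms(5) by blast
  next
    case False
    then show ?thesis
      using assms(6-8) a_c unfolding nonadjacent_common_nbrs_def by auto
  qed
qed

lemma thick_class_grow_induced:
  assumes E: "\<forall>e\<in>E. card e = 2" and "finite V" and "{a, c} \<notin> E" "a \<noteq> c"
    and nbrs: "\<And>v. v \<in> V - {a, c} \<Longrightarrow> \<exists>w\<in>V. \<exists>w'\<in>V. nonadjacent_common_nbrs E {a, c, v} w w'"
  shows "a \<in> B \<Longrightarrow> c \<in> B \<Longrightarrow> B \<subseteq> V \<Longrightarrow> (B, induced_edges E B) \<in> thick_class \<Longrightarrow>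
    (V, induced_edges E V) \<in> thick_class"
proof (induction "card (V - B)" arbitrary: B rule: less_induct)
  case less
  show ?case
  proof (cases "B = V")
    case True
    with less.prems show ?thesis by simp
  next
    case False
    then obtain v where "v \<in> V - B" using less.prems(3) by blast
    moreover obtain w w' where "w \<in> V" "w' \<in> V" "nonadjacent_common_nbrs E {a, c, v} w w'"
      using nbrs[of v] \<open>v \<in> V - B\<close> less.prems(1,2) by blast
    ultimately obtain u where u: "u \<in> V - B" "\<not> is_clique E {s\<in>B. {u, s} \<in> E}"
      using exists_cone_vertex[OF assms(3,4) less.prems(1,2)] by blast
    have "(insert u B, induced_edges E (insert u B)) \<in> thick_class"
      using thick_class_cone_induced[OF E less.prems(4)] u by blast
    moreover have "card (V - insert u B) < card (V - B)"
      using u \<open>finite V\<close> by (metis Diff_insert card_Diff1_less finite_Diff)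
    ultimately show ?thesis
      using less.hyps less.prems u by blast
  qed
qed

lemma thick_class_induced_C4:
  assumes E: "\<forall>e\<in>E. card e = 2" and "distinct [a, b, c, d]"
    and "{a, b} \<in> E" "{b, c} \<in> E" "{c, d} \<in> E" "{d, a} \<in> E" "{a, c} \<notin> E" "{b, d} \<notin> E"
  shows "({a, b, c, d}, induced_edges E {a, b, c, d}) \<in> thick_class"
proof -
  define g where "g k = [a, b, c, d] ! k" for k
  have "inj_on g {0, 1, 2, 3}"
    using assms(2) unfolding g_def inj_on_def by auto
  then have "(g ` {0, 1, 2, 3}, (\<lambda>e. g ` e) ` {{0, 1}, {1, 2}, {2, 3}, {3, 0}}) \<in> thick_class"
    using thick_class.iso[OF thick_class.base[unfolded K22_def]] by blast
  moreover have "g ` {0, 1, 2, 3} = {a, b, c, d}"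
    by (simp add: g_def)
  moreover have "e \<in> {{a, b}, {b, c}, {c, d}, {d, a}}" if "e \<in> induced_edges E {a, b, c, d}" for e
  proof -
    have "e \<in> E" "e \<subseteq> {a, b, c, d}"
      using that unfolding induced_edges_def by auto
    moreover obtain x y where "e = {x, y}" "x \<noteq> y"
      using E \<open>e \<in> E\<close> by (auto simp: card_2_iff)
    ultimately show ?thesis
      using assms(7,8) by (auto simp: insert_commute)
  qed
  then have "(\<lambda>e. g ` e) ` {{0, 1}, {1, 2}, {2, 3}, {3, 0}} = induced_edges E {a, b, c, d}"
    using assms(3-6) unfolding induced_edges_def by (auto simp: g_def)
  ultimately show ?thesis by simp
qed

lemma thick_class_if_induced_C4_and_common_nbrs:
  assumes "wf_graph (V, E)" "{a, b, c, d} \<subseteq> V" "distinct [a, b, c, d]"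
    and "{a, b} \<in> E" "{b, c} \<in> E" "{c, d} \<in> E" "{d, a} \<in> E" "{a, c} \<notin> E" "{b, d} \<notin> E"
    and "\<And>v. v \<in> V - {a, c} \<Longrightarrow> \<exists>w\<in>V. \<exists>w'\<in>V. nonadjacent_common_nbrs E {a, c, v} w w'"
  shows "(V, E) \<in> thick_class"
proof -
  have E: "\<forall>e\<in>E. card e = 2" and "finite V" and "induced_edges E V = E"
    using assms(1) unfolding wf_graph_def induced_edges_def by auto
  have "(V, induced_edges E V) \<in> thick_class"
    by (rule thick_class_grow_induced[OF E \<open>finite V\<close> assms(8) _ assms(10) _ _ assms(2)
          thick_class_induced_C4[OF E assms(3-9)]]) (use assms(3) in auto)
  with \<open>induced_edges E V = E\<close> show ?thesis by simp
qed

lemma all_edges_iff: "{u, v} \<in> all_edges n \<longleftrightarrow> u \<noteq> v \<and> u < n \<and> v < n"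
  unfolding all_edges_def by (cases u v rule: linorder_cases) (auto simp: doubleton_eq_iff)

lemma finite_all_edges: "finite (all_edges n)"
proof -
  have "all_edges n \<subseteq> (\<lambda>(u, v). {u, v}) ` ({..<n} \<times> {..<n})"
    unfolding all_edges_def by auto
  then show ?thesis by (rule finite_subset) auto
qed

lemma wf_graph_all_edges:
  assumes "E \<subseteq> all_edges n"
  shows "wf_graph ({0..<n}, E)"
proof -
  have "\<exists>u v. u \<in> {0..<n} \<and> v \<in> {0..<n} \<and> u \<noteq> v \<and> e = {u, v}" if e: "e \<in> E" for e
  proof -
    obtain u v where "e = {u, v}" "u < v" "v < n"
      using assms e unfolding all_edges_def by blast
    then show ?thesis by (intro exI[of _ u] exI[of _ v]) auto
  qed
  then show ?thesis unfolding wf_graph_def by simp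
qed

definition square_edges :: "nat \<Rightarrow> nat set set" where
  "square_edges i = {{4*i, 4*i+1}, {4*i+1, 4*i+2}, {4*i+2, 4*i+3}, {4*i+3, 4*i},
     {4*i, 4*i+2}, {4*i+1, 4*i+3}}"

definition induced_square_at :: "(nat set \<Rightarrow> bool) \<Rightarrow> nat \<Rightarrow> bool" where
  "induced_square_at f i \<longleftrightarrow> (\<forall>e\<in>square_edges i. f e = (e \<noteq> {4*i, 4*i+2} \<and> e \<noteq> {4*i+1, 4*i+3}))"

definition free_pairs :: "nat \<Rightarrow> nat set \<Rightarrow> nat set" where
  "free_pairs n X = {j. 2*j+1 < n \<and> 2*j \<notin> X \<and> 2*j+1 \<notin> X}"

definition extension_edges :: "nat set \<Rightarrow> nat \<Rightarrow> nat set set" where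
  "extension_edges X j = insert {2*j, 2*j+1} ((\<lambda>x. {x, 2*j}) ` X \<union> (\<lambda>x. {x, 2*j+1}) ` X)"

definition extension_pair_at :: "(nat set \<Rightarrow> bool) \<Rightarrow> nat set \<Rightarrow> nat \<Rightarrow> bool" where
  "extension_pair_at f X j \<longleftrightarrow> (\<forall>e\<in>extension_edges X j. f e = (e \<noteq> {2*j, 2*j+1}))"

text \<open>Candidate squares live on the blocks \<open>{4i, \<dots>, 4i+3}\<close> and candidate common neighbours
  on the pairs \<open>{2j, 2j+1}\<close>, so distinct candidates involve disjoint sets of coins.\<close>

definition good_coins :: "nat \<Rightarrow> (nat set \<Rightarrow> bool) \<Rightarrow> bool" where
  "good_coins n f \<longleftrightarrow> (\<exists>i<n div 4. induced_square_at f i) \<and>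
     (\<forall>x<n. \<forall>y<n. \<forall>v<n. \<exists>j\<in>free_pairs n {x, y, v}. extension_pair_at f {x, y, v} j)"

lemma extension_pair_at_nonadjacent_common_nbrs:
  assumes "X \<subseteq> {..<n}" "j \<in> free_pairs n X" "extension_pair_at f X j"
  shows "nonadjacent_common_nbrs {e \<in> all_edges n. f e} X (2*j) (2*j+1)"
proof -
  have "x \<noteq> 2*j" "x \<noteq> 2*j+1" "x < n" if "x \<in> X" for x
    using that assms(1,2) unfolding free_pairs_def by auto
  then show ?thesis
    using assms(2,3) unfolding nonadjacent_common_nbrs_def extension_pair_at_def
      extension_edges_def free_pairs_def by (auto simp: all_edges_iff doubleton_eq_iff)
qed

lemma good_coins_thick:
  assumes "good_coins n f"
  shows "({0..<n}, {e \<in> all_edges n. f e}) \<in> thick_class"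
proof -
  let ?E = "{e \<in> all_edges n. f e}"
  obtain i where "i < n div 4" "induced_square_at f i"
    using assms unfolding good_coins_def by blast
  then have C4: "{4*i, 4*i+1} \<in> ?E" "{4*i+1, 4*i+2} \<in> ?E" "{4*i+2, 4*i+3} \<in> ?E"
    "{4*i+3, 4*i} \<in> ?E" "{4*i, 4*i+2} \<notin> ?E" "{4*i+1, 4*i+3} \<notin> ?E"
    unfolding induced_square_at_def square_edges_def by (auto simp: all_edges_iff doubleton_eq_iff)
  have nbrs: "\<exists>w\<in>{0..<n}. \<exists>w'\<in>{0..<n}. nonadjacent_common_nbrs ?E {4*i, 4*i+2, v} w w'"
    if v: "v \<in> {0..<n} - {4*i, 4*i+2}" for v
  proof -
    have "4*i < n" "4*i+2 < n" "v < n"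
      using \<open>i < n div 4\<close> v by auto
    then obtain j where j: "j \<in> free_pairs n {4*i, 4*i+2, v}" "extension_pair_at f {4*i, 4*i+2, v} j"
      using assms unfolding good_coins_def by blast
    have X: "{4*i, 4*i+2, v} \<subseteq> {..<n}"
      using \<open>4*i < n\<close> \<open>4*i+2 < n\<close> \<open>v < n\<close> by simp
    from j(1) have "2*j \<in> {0..<n}" "2*j+1 \<in> {0..<n}"
      unfolding free_pairs_def by auto
    with extension_pair_at_nonadjacent_common_nbrs[OF X j] show ?thesis
      by blast
  qed
  show ?thesis
  proof (rule thick_class_if_induced_C4_and_common_nbrs[OF _ _ _ C4 nbrs])
    show "wf_graph ({0..<n}, ?E)" by (rule wf_graph_all_edges) auto
    show "{4*i, 4*i+1, 4*i+2, 4*i+3} \<subseteq> {0..<n}" using \<open>i < n div 4\<close> by auto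
  qed simp
qed

lemma card_square_edges: "card (square_edges i) \<le> 6"
  using card_length[of "[{4*i, 4*i+1}, {4*i+1, 4*i+2}, {4*i+2, 4*i+3},
    {4*i+3, 4*i}, {4*i, 4*i+2}, {4*i+1, 4*i+3}]"]
  unfolding square_edges_def by simp

lemma disjoint_family_square_edges: "disjoint_family square_edges"
proof -
  have owned: "t div 4 = i" if "e \<in> square_edges i" "t \<in> e" for e t i
    using that unfolding square_edges_def by auto
  have nonempty: "e \<noteq> {}" if "e \<in> square_edges i" for e i
    using that unfolding square_edges_def by auto
  show ?thesis
    unfolding disjoint_family_on_def using owned nonempty by blast
qed

lemma prob_no_square_le:
  "measure_pmf.prob (fair_coins (all_edges n)) {f. \<not> (\<exists>i<n div 4. induced_square_at f i)}
     \<le> (63/64) ^ (n div 4)"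
proof -
  have "{f. \<not> (\<exists>i<n div 4. induced_square_at f i)} =
        {f. \<forall>i\<in>{..<n div 4}. \<exists>e\<in>square_edges i. f e \<noteq> (e \<noteq> {4*i, 4*i+2} \<and> e \<noteq> {4*i+1, 4*i+3})}"
    unfolding induced_square_at_def by auto
  also have "measure_pmf.prob (fair_coins (all_edges n)) \<dots> \<le> (1 - (1/2) ^ 6) ^ (n div 4)"
  proof (rule prob_fair_coins_avoid_patterns_le[OF finite_all_edges])
    show "square_edges i \<subseteq> all_edges n" if "i \<in> {..<n div 4}" for i
      using that unfolding square_edges_def by (auto simp: all_edges_iff)
  qed (auto intro: disjoint_family_on_mono[OF _ disjoint_family_square_edges] card_square_edges)
  also have "1 - (1/2::real) ^ 6 = 63/64"
    by (simp add: power_divide)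
  finally show ?thesis .
qed

lemma card_extension_edges:
  assumes "finite X"
  shows "card (extension_edges X j) \<le> 2 * card X + 1"
proof -
  let ?A = "(\<lambda>x. {x, 2*j}) ` X" and ?B = "(\<lambda>x. {x, 2*j+1}) ` X"
  have "card (extension_edges X j) \<le> card (?A \<union> ?B) + 1"
    unfolding extension_edges_def using assms by (simp add: card_insert_if)
  also have "\<dots> \<le> card ?A + card ?B + 1"
    using card_Un_le by simp
  also have "\<dots> \<le> 2 * card X + 1"
    using card_image_le[OF assms, of "\<lambda>x. {x, 2*j}"] card_image_le[OF assms, of "\<lambda>x. {x, 2*j+1}"]
    by linarith
  finally show ?thesis .
qed

lemma disjoint_family_on_extension_edges: "disjoint_family_on (extension_edges X) (free_pairs n X)"
proof -
  have owner: "\<exists>t\<in>e. t \<notin> X \<and> t div 2 = j"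
    if "e \<in> extension_edges X j" "j \<in> free_pairs n X" for e j
    using that unfolding extension_edges_def free_pairs_def by auto
  have owned: "t div 2 = j" if "e \<in> extension_edges X j" "t \<in> e" "t \<notin> X" for e t j
    using that unfolding extension_edges_def by auto
  show ?thesis
    unfolding disjoint_family_on_def using owner owned by blast
qed

lemma card_free_pairs:
  assumes "finite X"
  shows "n div 2 - card X \<le> card (free_pairs n X)"
proof -
  have "{..<n div 2} - (\<lambda>t. t div 2) ` X \<subseteq> free_pairs n X"
    unfolding free_pairs_def by (force simp: image_iff)
  moreover have "finite (free_pairs n X)"
    unfolding free_pairs_def by (rule finite_subset[of _ "{..<n}"]) auto
  ultimately have "card ({..<n div 2} - (\<lambda>t. t div 2) ` X) \<le> card (free_pairs n X)"
    by (rule card_mono[rotated])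
  moreover have "n div 2 - card ((\<lambda>t. t div 2) ` X) \<le> card ({..<n div 2} - (\<lambda>t. t div 2) ` X)"
    using diff_card_le_card_Diff[of "(\<lambda>t. t div 2) ` X" "{..<n div 2}"] assms by simp
  ultimately show ?thesis
    using card_image_le[OF assms, of "\<lambda>t. t div 2"] by linarith
qed

lemma prob_no_extension_pair_le:
  assumes "finite X" and "X \<subseteq> {..<n}" and "card X \<le> k"
  shows "measure_pmf.prob (fair_coins (all_edges n))
           {f. \<not> (\<exists>j\<in>free_pairs n X. extension_pair_at f X j)}
         \<le> (1 - (1/2) ^ (2 * k + 1)) ^ (n div 2 - k)"
proof -
  have "{f. \<not> (\<exists>j\<in>free_pairs n X. extension_pair_at f X j)} =
        {f. \<forall>j\<in>free_pairs n X. \<exists>e\<in>extension_edges X j. f e \<noteq> (e \<noteq> {2*j, 2*j+1})}"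
    unfolding extension_pair_at_def by auto
  also have "measure_pmf.prob (fair_coins (all_edges n)) \<dots>
      \<le> (1 - (1/2) ^ (2 * k + 1)) ^ (n div 2 - k)"
  proof (rule prob_fair_coins_avoid_patterns_le
      [OF finite_all_edges _ _ disjoint_family_on_extension_edges])
    show "finite (free_pairs n X)"
      unfolding free_pairs_def by (rule finite_subset[of _ "{..<n}"]) auto
    show "extension_edges X j \<subseteq> all_edges n" if "j \<in> free_pairs n X" for j
      using that assms(2) unfolding extension_edges_def free_pairs_def
      by (auto simp: all_edges_iff)
    show "card (extension_edges X j) \<le> 2 * k + 1" for j
      using card_extension_edges[OF assms(1), of j] assms(3) by linarith
    show "n div 2 - k \<le> card (free_pairs n X)"
      using card_free_pairs[OF assms(1), of n] assms(3) by linarith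
  qed
  finally show ?thesis .
qed

definition failure_bound :: "nat \<Rightarrow> real" where
  "failure_bound n = (63/64) ^ (n div 4) + real n ^ 3 * (127/128) ^ (n div 2 - 3)"

lemma prob_not_good_coins_le:
  "measure_pmf.prob (fair_coins (all_edges n)) {f. \<not> good_coins n f} \<le> failure_bound n"
proof -
  let ?P = "measure_pmf.prob (fair_coins (all_edges n))"
  let ?T = "{..<n} \<times> {..<n} \<times> {..<n}"
  let ?F = "\<lambda>(x, y, v). {f. \<not> (\<exists>j\<in>free_pairs n {x, y, v}. extension_pair_at f {x, y, v} j)}"
  have "?P (?F t) \<le> (127/128) ^ (n div 2 - 3)" if "t \<in> ?T" for t
  proof -
    obtain x y v where "t = (x, y, v)" "{x, y, v} \<subseteq> {..<n}"
      using \<open>t \<in> ?T\<close> by auto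
    moreover have "card {x, y, v} \<le> 3"
      using card_length[of "[x, y, v]"] by simp
    ultimately have "?P (?F t) \<le> (1 - (1/2) ^ (2 * 3 + 1)) ^ (n div 2 - 3)"
      using prob_no_extension_pair_le[of "{x, y, v}" n 3] by simp
    also have "1 - (1/2::real) ^ (2 * 3 + 1) = 127/128"
      by (simp add: power_divide)
    finally show ?thesis .
  qed
  then have "?P (\<Union>t\<in>?T. ?F t) \<le> (\<Sum>t\<in>?T. (127/128) ^ (n div 2 - 3))"
    by (intro order.trans[OF measure_pmf.finite_measure_subadditive_finite] sum_mono) auto
  also have "\<dots> = real n ^ 3 * (127/128) ^ (n div 2 - 3)"
    by (simp add: card_cartesian_product power3_eq_cube)
  finally have extension_failure: "?P (\<Union>t\<in>?T. ?F t) \<le> real n ^ 3 * (127/128) ^ (n div 2 - 3)" .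
  let ?S = "{f. \<not> (\<exists>i<n div 4. induced_square_at f i)}"
  have "{f. \<not> good_coins n f} \<subseteq> ?S \<union> (\<Union>t\<in>?T. ?F t)"
    unfolding good_coins_def by auto
  then have "?P {f. \<not> good_coins n f} \<le> ?P (?S \<union> (\<Union>t\<in>?T. ?F t))"
    by (rule measure_pmf.finite_measure_mono) simp
  also have "\<dots> \<le> ?P ?S + ?P (\<Union>t\<in>?T. ?F t)"
    by (rule measure_Un_le) simp_all
  finally show ?thesis
    using prob_no_square_le[of n] extension_failure unfolding failure_bound_def by linarith
qed

lemma power_le_powr:
  fixes q :: real
  assumes "0 < q" "q \<le> 1" "r \<le> real k"
  shows "q ^ k \<le> q powr r"
  using assms by (simp add: powr_realpow[symmetric] powr_mono')

lemma failure_bound_tendsto_0: "failure_bound \<longlonglongrightarrow> 0"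
proof (rule tendsto_sandwich[of "\<lambda>_. 0" _ _ "\<lambda>n. (63/64) powr (real n / 4 - 1) +
    real n ^ 3 * (127/128) powr (real n / 2 - 4)"])
  have "real n / 4 - 1 \<le> real (n div 4)" "real n / 2 - 4 \<le> real (n div 2 - 3)" for n
    by linarith+
  then show "\<forall>\<^sub>F n in sequentially. failure_bound n \<le> (63/64) powr (real n / 4 - 1) +
      real n ^ 3 * (127/128) powr (real n / 2 - 4)"
    unfolding failure_bound_def
    by (intro always_eventually allI add_mono mult_left_mono power_le_powr) simp_all
  show "(\<lambda>n. (63/64) powr (real n / 4 - 1) + real n ^ 3 * (127/128) powr (real n / 2 - 4))
      \<longlonglongrightarrow> (0::real)"
    by (intro tendsto_add_zero; real_asymp)
qed (auto simp: failure_bound_def)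

lemma prob_thick_ge:
  "1 - failure_bound n \<le> measure_pmf.prob (Gnp n (1/2)) {E. ({0..<n}, E) \<in> thick_class}"
proof -
  have "1 - failure_bound n \<le> measure_pmf.prob (fair_coins (all_edges n)) {f. good_coins n f}"
    using prob_not_good_coins_le[of n]
      measure_pmf.prob_compl[of "{f. good_coins n f}" "fair_coins (all_edges n)"]
    by (simp add: Compl_eq_Diff_UNIV[symmetric] Collect_neg_eq[symmetric])
  also have "\<dots> \<le> measure_pmf.prob (fair_coins (all_edges n))
      {f. ({0..<n}, {e \<in> all_edges n. f e}) \<in> thick_class}"
    by (rule measure_pmf.finite_measure_mono) (auto intro: good_coins_thick)
  finally show ?thesis
    unfolding Gnp_def by simp
qed

theorem theorem3p10:
  shows "(\<lambda>n. measure_pmf.prob (Gnp n (1/2)) {E. ({0..<n}, E) \<in> thick_class})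
           \<longlonglongrightarrow> 1"
proof (rule tendsto_sandwich[of "\<lambda>n. 1 - failure_bound n" _ _ "\<lambda>_. 1"])
  show "(\<lambda>n. 1 - failure_bound n) \<longlonglongrightarrow> 1"
    using tendsto_diff[OF tendsto_const failure_bound_tendsto_0] by simp
qed (simp_all add: prob_thick_ge)

end
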